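(* For $i=1,2$ let $(E_i,F_i)$ be a pair of dual spaces over a division ring $\mathbb{K}_i$, and let $g:\mathcal{L}_{F_1}(E_1)\to\mathcal{L}_{F_2}(E_2)$ be a map preserving arbitrary joins and sending atoms to atoms or $0$, such that $g(\mathcal{L}_{F_1}(E_1))$ has length $\ge3$. Then there is a semilinear map $f:E_1\to E_2$ inducing $g$, i.e. $g(\mathbb{K}_1v)=\mathbb{K}_2f(v)$ for all $v\in E_1$.
   Context: A pair of dual spaces $(E,F)$ over a division ring $\mathbb{K}$ consists of a left vector space $E$ and a right vector space $F$ over $\mathbb{K}$ with a non-degenerate bilinear map $\beta:E\times F\to\mathbb{K}$. For $A\subseteq E$, $A^\perp:=\{y\in F;\beta(x,y)=0\ \forall x\in A\}$, similarly for $B\subseteq F$; $\mathcal{L}_F(E):=\{A\subseteq E;A^{\perp\perp}=A\}$ ordered by inclusion (a complete lattice whose atoms are the one-dimensional subspaces). A semilinear map $f:E_1\to E_2$ is an additive map for which there is a homomorphism of division rings $\sigma:\mathbb{K}_1\to\mathbb{K}_2$ with $f(\lambda v)=\sigma(\lambda)f(v)$. $\mathbb{K}_2f(v)$ denotes the subspace spanned by $f(v)$ (zero if $f(v)=0$). *)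

theory Defs
  imports Main
begin

text \<open>Left vector space over a (possibly non-commutative) division ring, given by a scalar
multiplication on an abelian group (the whole type is the space).\<close>
definition left_vs :: "('k::division_ring \<Rightarrow> 'e::ab_group_add \<Rightarrow> 'e) \<Rightarrow> bool" where
  "left_vs sc \<longleftrightarrow>
     (\<forall>a x y. sc a (x + y) = sc a x + sc a y) \<and>
     (\<forall>a b x. sc (a + b) x = sc a x + sc b x) \<and>
     (\<forall>a b x. sc a (sc b x) = sc (a * b) x) \<and>
     (\<forall>x. sc 1 x = x)"

definition right_vs :: "('f::ab_group_add \<Rightarrow> 'k::division_ring \<Rightarrow> 'f) \<Rightarrow> bool" where
  "right_vs sc \<longleftrightarrow>
     (\<forall>a x y. sc (x + y) a = sc x a + sc y a) \<and>
     (\<forall>a b x. sc x (a + b) = sc x a + sc x b) \<and>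
     (\<forall>a b x. sc (sc x a) b = sc x (a * b)) \<and>
     (\<forall>x. sc x 1 = x)"

definition dual_pair ::
  "('k::division_ring \<Rightarrow> 'e::ab_group_add \<Rightarrow> 'e) \<Rightarrow> ('f::ab_group_add \<Rightarrow> 'k \<Rightarrow> 'f)
   \<Rightarrow> ('e \<Rightarrow> 'f \<Rightarrow> 'k) \<Rightarrow> bool" where
  "dual_pair scE scF beta \<longleftrightarrow>
     left_vs scE \<and> right_vs scF \<and>
     (\<forall>x x' y. beta (x + x') y = beta x y + beta x' y) \<and>
     (\<forall>a x y. beta (scE a x) y = a * beta x y) \<and>
     (\<forall>x y y'. beta x (y + y') = beta x y + beta x y') \<and>
     (\<forall>a x y. beta x (scF y a) = beta x y * a) \<and>
     (\<forall>x. (\<forall>y. beta x y = 0) \<longrightarrow> x = 0) \<and>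
     (\<forall>y. (\<forall>x. beta x y = 0) \<longrightarrow> y = 0)"

definition perpE :: "('e \<Rightarrow> 'f \<Rightarrow> 'k::zero) \<Rightarrow> 'e set \<Rightarrow> 'f set" where
  "perpE beta A = {y. \<forall>x\<in>A. beta x y = 0}"

definition perpF :: "('e \<Rightarrow> 'f \<Rightarrow> 'k::zero) \<Rightarrow> 'f set \<Rightarrow> 'e set" where
  "perpF beta B = {x. \<forall>y\<in>B. beta x y = 0}"

text \<open>The lattice L_F(E) of closed subsets A = A^perp perp, ordered by inclusion.\<close>
definition closedL :: "('e \<Rightarrow> 'f \<Rightarrow> 'k::zero) \<Rightarrow> 'e set set" where
  "closedL beta = {A. perpF beta (perpE beta A) = A}"

definition Ljoin :: "('e \<Rightarrow> 'f \<Rightarrow> 'k::zero) \<Rightarrow> 'e set set \<Rightarrow> 'e set" where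
  "Ljoin beta S = perpF beta (perpE beta (\<Union>S))"

definition Lbot :: "('e \<Rightarrow> 'f \<Rightarrow> 'k::zero) \<Rightarrow> 'e set" where
  "Lbot beta = Ljoin beta {}"

definition Latom :: "('e \<Rightarrow> 'f \<Rightarrow> 'k::zero) \<Rightarrow> 'e set \<Rightarrow> bool" where
  "Latom beta A \<longleftrightarrow> A \<in> closedL beta \<and> A \<noteq> Lbot beta \<and>
     (\<forall>B\<in>closedL beta. B \<subset> A \<longrightarrow> B = Lbot beta)"

definition length_ge :: "'a set set \<Rightarrow> nat \<Rightarrow> bool" where
  "length_ge P n \<longleftrightarrow> (\<exists>c. (\<forall>i\<le>n. c i \<in> P) \<and> (\<forall>i<n. c i \<subset> c (Suc i)))"

definition divring_hom :: "('k1::division_ring \<Rightarrow> 'k2::division_ring) \<Rightarrow> bool" where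
  "divring_hom \<sigma> \<longleftrightarrow> (\<forall>a b. \<sigma> (a + b) = \<sigma> a + \<sigma> b) \<and>
     (\<forall>a b. \<sigma> (a * b) = \<sigma> a * \<sigma> b) \<and> \<sigma> 1 = 1"

definition semilinear ::
  "('k1::division_ring \<Rightarrow> 'e1::ab_group_add \<Rightarrow> 'e1) \<Rightarrow> ('k2::division_ring \<Rightarrow> 'e2::ab_group_add \<Rightarrow> 'e2)
   \<Rightarrow> ('e1 \<Rightarrow> 'e2) \<Rightarrow> bool" where
  "semilinear sc1 sc2 f \<longleftrightarrow> (\<forall>x y. f (x + y) = f x + f y) \<and>
     (\<exists>\<sigma>. divring_hom \<sigma> \<and> (\<forall>a v. f (sc1 a v) = sc2 (\<sigma> a) (f v)))"

definition span1 :: "('k \<Rightarrow> 'e \<Rightarrow> 'e) \<Rightarrow> 'e \<Rightarrow> 'e set" where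
  "span1 sc v = range (\<lambda>a. sc a v)"

end

theory Submission
  imports Defs
begin

text \<open>The map \<open>x \<mapsto> g (\<bbbK>\<^sub>1 x)\<close> sends every vector of \<open>E\<^sub>1\<close> to a line of \<open>E\<^sub>2\<close> or to \<open>0\<close>,
  and since lines and planes are closed, preservation of joins gives
  \<open>g (\<bbbK>\<^sub>1 (x + y)) \<subseteq> g (\<bbbK>\<^sub>1 x) + g (\<bbbK>\<^sub>1 y)\<close>. The classical construction behind the
  fundamental theorem of projective geometry then applies. Fix \<open>a\<close> with \<open>g (\<bbbK>\<^sub>1 a) = \<bbbK>\<^sub>2 a'\<close>; for
  \<open>x\<close> with \<open>a' \<notin> g (\<bbbK>\<^sub>1 x)\<close> let \<open>f x\<close> be the unique vector of \<open>g (\<bbbK>\<^sub>1 x)\<close> with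
  \<open>a' + f x \<in> g (\<bbbK>\<^sub>1 (a + x))\<close>. Writing a sum in two ways and intersecting the two planes it
  lies in shows that \<open>f\<close> is additive where defined; the length hypothesis supplies vectors
  whose image leaves any given plane, which reduces the degenerate configurations to the
  generic one. The lifts for three base points with independent images agree wherever they
  are defined and together cover \<open>E\<^sub>1\<close>, so they glue to an additive \<open>f\<close>. Finally
  \<open>g (\<bbbK>\<^sub>1 (\<lambda> x)) \<subseteq> g (\<bbbK>\<^sub>1 x)\<close> makes \<open>f (\<lambda> x)\<close> a multiple of \<open>f x\<close>, and the factor does not
  depend on \<open>x\<close>, which yields the homomorphism \<open>\<sigma>\<close>.\<close>

section \<open>Lines and planes in a left vector space\<close>

locale left_vector_space =
  fixes scale :: "'k::division_ring \<Rightarrow> 'e::ab_group_add \<Rightarrow> 'e" (infixr "\<cdot>" 75)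
  assumes scale_laws: "left_vs scale"
begin

lemma scale_right_distrib [simp]: "a \<cdot> (x + y) = a \<cdot> x + a \<cdot> y"
  and scale_left_distrib: "(a + b) \<cdot> x = a \<cdot> x + b \<cdot> x"
  and scale_scale [simp]: "a \<cdot> b \<cdot> x = (a * b) \<cdot> x"
  and scale_one [simp]: "1 \<cdot> x = x"
  using scale_laws unfolding left_vs_def by blast+

lemma scale_zero_left [simp]: "0 \<cdot> x = 0"
  using scale_left_distrib [of 0 0 x] by simp

lemma scale_zero_right [simp]: "a \<cdot> 0 = 0"
  using scale_right_distrib [of a 0 0] by simp

lemma scale_minus_left [simp]: "(- a) \<cdot> x = - (a \<cdot> x)"
  using scale_left_distrib [of "- a" a x] by (simp add: eq_neg_iff_add_eq_0)

lemma scale_minus_right [simp]: "a \<cdot> (- x) = - (a \<cdot> x)"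
  using scale_right_distrib [of a "- x" x] by (simp add: eq_neg_iff_add_eq_0)

lemma scale_left_diff_distrib: "(a - b) \<cdot> x = a \<cdot> x - b \<cdot> x"
  using scale_left_distrib [of a "- b" x] by simp

lemma scale_right_diff_distrib [simp]: "a \<cdot> (x - y) = a \<cdot> x - a \<cdot> y"
  using scale_right_distrib [of a x "- y"] by simp

lemma scale_eq_0_iff [simp]: "a \<cdot> x = 0 \<longleftrightarrow> a = 0 \<or> x = 0"
proof (cases "a = 0")
  case False
  have "x = 0" if "a \<cdot> x = 0"
  proof -
    from that have "inverse a \<cdot> a \<cdot> x = 0"
      by simp
    with False show ?thesis
      by simp
  qed
  then show ?thesis
    by auto
qed simp

lemma scale_right_cancel: "a \<cdot> x = b \<cdot> x \<Longrightarrow> x \<noteq> 0 \<Longrightarrow> a = b"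
  using scale_left_diff_distrib [of a b x] by simp

lemma eq_inverse_scale: "a \<noteq> 0 \<Longrightarrow> a \<cdot> x = y \<Longrightarrow> x = inverse a \<cdot> y"
  by auto

abbreviation line :: "'e \<Rightarrow> 'e set"
  where "line v \<equiv> span1 scale v"

definition plane :: "'e \<Rightarrow> 'e \<Rightarrow> 'e set"
  where "plane u v = {a \<cdot> u + b \<cdot> v | a b. True}"

definition indep2 :: "'e \<Rightarrow> 'e \<Rightarrow> bool"
  where "indep2 u v \<longleftrightarrow> (\<forall>a b. a \<cdot> u + b \<cdot> v = 0 \<longrightarrow> a = 0 \<and> b = 0)"

definition indep3 :: "'e \<Rightarrow> 'e \<Rightarrow> 'e \<Rightarrow> bool"
  where "indep3 u v w \<longleftrightarrow> (\<forall>a b c. a \<cdot> u + b \<cdot> v + c \<cdot> w = 0 \<longrightarrow> a = 0 \<and> b = 0 \<and> c = 0)"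

lemma line_iff: "w \<in> line v \<longleftrightarrow> (\<exists>a. w = a \<cdot> v)"
  unfolding span1_def by auto

lemma plane_iff: "w \<in> plane u v \<longleftrightarrow> (\<exists>a b. w = a \<cdot> u + b \<cdot> v)"
  unfolding plane_def by auto

lemma line_self [simp]: "v \<in> line v"
  unfolding line_iff by (rule exI [of _ 1]) simp

lemma zero_in_line [simp]: "0 \<in> line v"
  unfolding line_iff by (rule exI [of _ 0]) simp

lemma line_0 [simp]: "line 0 = {0}"
  unfolding span1_def by auto

lemma line_eq_0_iff: "line v = {0} \<longleftrightarrow> v = 0"
  using line_self by (metis singletonD line_0)

lemma line_scale: "w \<in> line v \<Longrightarrow> a \<cdot> w \<in> line v"
  unfolding line_iff by auto

lemma line_add: "w \<in> line v \<Longrightarrow> z \<in> line v \<Longrightarrow> w + z \<in> line v"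
  unfolding line_iff by (auto simp: scale_left_distrib [symmetric])

lemma line_neg: "w \<in> line v \<Longrightarrow> - w \<in> line v"
  using line_scale [of w v "- 1"] by simp

lemma line_subset_line: "w \<in> line v \<Longrightarrow> line w \<subseteq> line v"
  using line_scale by (auto simp: line_iff [of _ w])

lemma line_eq_if_mem:
  assumes "w \<in> line v" "w \<noteq> 0"
  shows "line w = line v"
proof -
  obtain a where a: "w = a \<cdot> v"
    using assms unfolding line_iff by auto
  then have "a \<noteq> 0"
    using assms by auto
  then have "v = inverse a \<cdot> w"
    using a by simp
  then have "v \<in> line w"
    unfolding line_iff by blast
  then show ?thesis
    using line_subset_line assms by blast
qed

lemma line_scale_eq:
  assumes "a \<noteq> 0"
  shows "line (a \<cdot> v) = line v"
proof (cases "v = 0")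
  case False
  then show ?thesis
    using assms by (intro line_eq_if_mem) (auto simp: line_iff)
qed simp

lemma line_minus [simp]: "line (- v) = line v"
  using line_scale_eq [of "- 1" v] by simp

lemma left_in_plane [simp]: "u \<in> plane u v"
  unfolding plane_iff by (rule exI [of _ 1], rule exI [of _ 0]) simp

lemma right_in_plane [simp]: "v \<in> plane u v"
  unfolding plane_iff by (rule exI [of _ 0], rule exI [of _ 1]) simp

lemma plane_add:
  assumes "w \<in> plane u v" "z \<in> plane u v"
  shows "w + z \<in> plane u v"
proof -
  obtain a b c d where "w = a \<cdot> u + b \<cdot> v" "z = c \<cdot> u + d \<cdot> v"
    using assms unfolding plane_iff by blast
  then have "w + z = (a + c) \<cdot> u + (b + d) \<cdot> v"
    by (simp add: scale_left_distrib algebra_simps)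
  then show ?thesis
    unfolding plane_iff by blast
qed

lemma plane_scale: "w \<in> plane u v \<Longrightarrow> c \<cdot> w \<in> plane u v"
  unfolding plane_iff by (metis scale_right_distrib scale_scale)

lemma plane_neg: "w \<in> plane u v \<Longrightarrow> - w \<in> plane u v"
  using plane_scale [of w u v "- 1"] by simp

lemma plane_diff: "w \<in> plane u v \<Longrightarrow> z \<in> plane u v \<Longrightarrow> w - z \<in> plane u v"
  using plane_add [of w u v "- z"] plane_neg by simp

lemma plane_add_cancel_left: "u \<in> plane p q \<Longrightarrow> u + w \<in> plane p q \<Longrightarrow> w \<in> plane p q"
  using plane_diff [of "u + w" p q u] by simp

lemma plane_subset_plane: "u \<in> plane p q \<Longrightarrow> v \<in> plane p q \<Longrightarrow> plane u v \<subseteq> plane p q"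
  by (auto simp: plane_iff [of _ u v] intro!: plane_add plane_scale)

lemma plane_subset_line: "u \<in> line z \<Longrightarrow> v \<in> line z \<Longrightarrow> plane u v \<subseteq> line z"
  by (auto simp: plane_iff intro!: line_add line_scale)

lemma line_subset_plane: "w \<in> plane u v \<Longrightarrow> line w \<subseteq> plane u v"
  using plane_scale by (auto simp: line_iff)

lemma plane_commute: "plane u v = plane v u"
  by (intro equalityI plane_subset_plane) auto

lemma line_subset_plane_left: "line u \<subseteq> plane u v"
  and line_subset_plane_right: "line v \<subseteq> plane u v"
  by (simp_all add: line_subset_plane)

lemma plane_0 [simp]: "plane u 0 = line u"
  using line_subset_plane_left [of u 0] plane_subset_line [of u u 0] by auto

lemma plane_minus_right [simp]: "plane u (- v) = plane u v"
proof
  show "plane u (- v) \<subseteq> plane u v"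
    by (intro plane_subset_plane plane_neg) auto
  have "v \<in> plane u (- v)"
    using plane_neg [OF right_in_plane [of "- v" u]] by simp
  then show "plane u v \<subseteq> plane u (- v)"
    by (intro plane_subset_plane) auto
qed

lemma plane_exchange:
  assumes "x \<in> plane p y" "x \<notin> line y"
  shows "p \<in> plane x y"
proof -
  obtain a b where ab: "x = a \<cdot> p + b \<cdot> y"
    using assms(1) unfolding plane_iff by blast
  have "a \<noteq> 0"
    using ab assms(2) unfolding line_iff by auto
  moreover have "a \<cdot> p = x - b \<cdot> y"
    using ab by (simp add: algebra_simps)
  ultimately have "p = inverse a \<cdot> (x - b \<cdot> y)"
    by (rule eq_inverse_scale)
  then have "p = inverse a \<cdot> x + (- (inverse a * b)) \<cdot> y"
    by simp
  then show ?thesis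
    unfolding plane_iff by blast
qed

lemma indep2_nonzero:
  assumes "indep2 u v"
  shows "u \<noteq> 0 \<and> v \<noteq> 0"
proof -
  have "1 \<cdot> 0 + 0 \<cdot> v = 0" "0 \<cdot> u + 1 \<cdot> 0 = 0"
    by simp_all
  then show ?thesis
    using assms unfolding indep2_def by fastforce
qed

lemma indep2_commute: "indep2 u v \<Longrightarrow> indep2 v u"
  unfolding indep2_def by (metis add.commute)

lemma indep2_iff: "indep2 u v \<longleftrightarrow> u \<noteq> 0 \<and> v \<notin> line u"
proof
  assume h: "indep2 u v"
  have "(- a) \<cdot> u + 1 \<cdot> (a \<cdot> u) = 0" for a
    by simp
  then have "v \<notin> line u"
    using h unfolding indep2_def line_iff by fastforce
  then show "u \<noteq> 0 \<and> v \<notin> line u"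
    using indep2_nonzero [OF h] by blast
next
  assume h: "u \<noteq> 0 \<and> v \<notin> line u"
  show "indep2 u v"
    unfolding indep2_def
  proof (intro allI impI)
    fix a b
    assume e: "a \<cdot> u + b \<cdot> v = 0"
    show "a = 0 \<and> b = 0"
    proof (cases "b = 0")
      case True
      then show ?thesis
        using e h by simp
    next
      case False
      have "b \<cdot> v = (- a) \<cdot> u"
        using e by (simp add: eq_neg_iff_add_eq_0 add.commute)
      with False have "v = inverse b \<cdot> (- a) \<cdot> u"
        by (rule eq_inverse_scale)
      then have "v = (- (inverse b * a)) \<cdot> u"
        by simp
      then show ?thesis
        using h unfolding line_iff by blast
    qed
  qed
qed

lemma indep3_iff: "indep3 u v w \<longleftrightarrow> indep2 u v \<and> w \<notin> plane u v"
proof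
  assume h: "indep3 u v w"
  have "indep2 u v"
    unfolding indep2_def
  proof (intro allI impI)
    fix a b
    assume "a \<cdot> u + b \<cdot> v = 0"
    then have "a \<cdot> u + b \<cdot> v + 0 \<cdot> w = 0"
      by simp
    then show "a = 0 \<and> b = 0"
      using h unfolding indep3_def by blast
  qed
  moreover have "(- a) \<cdot> u + (- b) \<cdot> v + 1 \<cdot> (a \<cdot> u + b \<cdot> v) = 0" for a b
    by simp
  then have "w \<notin> plane u v"
    using h unfolding indep3_def plane_iff by fastforce
  ultimately show "indep2 u v \<and> w \<notin> plane u v"
    by blast
next
  assume h: "indep2 u v \<and> w \<notin> plane u v"
  show "indep3 u v w"
    unfolding indep3_def
  proof (intro allI impI)
    fix a b c
    assume e: "a \<cdot> u + b \<cdot> v + c \<cdot> w = 0"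
    show "a = 0 \<and> b = 0 \<and> c = 0"
    proof (cases "c = 0")
      case True
      then show ?thesis
        using e h unfolding indep2_def by simp
    next
      case False
      have "c \<cdot> w + (a \<cdot> u + b \<cdot> v) = 0"
        using e by (simp only: add.commute)
      then have "c \<cdot> w = - (a \<cdot> u + b \<cdot> v)"
        by (simp only: eq_neg_iff_add_eq_0)
      with False have "w = inverse c \<cdot> - (a \<cdot> u + b \<cdot> v)"
        by (rule eq_inverse_scale)
      then have "w = (- (inverse c * a)) \<cdot> u + (- (inverse c * b)) \<cdot> v"
        by simp
      then show ?thesis
        using h unfolding plane_iff by blast
    qed
  qed
qed

lemma indep3_transform:
  assumes "indep3 u v w"
    and "\<And>a b c. a \<cdot> X + b \<cdot> Y + c \<cdot> Z = fa a b c \<cdot> u + fb a b c \<cdot> v + fc a b c \<cdot> w"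
    and "\<And>a b c. fa a b c = 0 \<Longrightarrow> fb a b c = 0 \<Longrightarrow> fc a b c = 0 \<Longrightarrow> a = 0 \<and> b = 0 \<and> c = 0"
  shows "indep3 X Y Z"
  using assms(1) assms(3) unfolding indep3_def assms(2) by blast

lemma indep3_swap12: "indep3 u v w \<Longrightarrow> indep3 v u w"
  by (rule indep3_transform [where fa = "\<lambda>a b c. b" and fb = "\<lambda>a b c. a" and fc = "\<lambda>a b c. c"])
    (simp_all add: add.commute add.left_commute)

lemma indep3_swap23: "indep3 u v w \<Longrightarrow> indep3 u w v"
  by (rule indep3_transform [where fa = "\<lambda>a b c. a" and fb = "\<lambda>a b c. c" and fc = "\<lambda>a b c. b"])
    (simp_all add: add.commute add.left_commute add.assoc)

lemma indep3_rotate: "indep3 u v w \<Longrightarrow> indep3 v w u"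
  using indep3_swap12 indep3_swap23 by blast

lemma indep3_imp_indep2:
  assumes "indep3 u v w"
  shows "indep2 u v \<and> indep2 u w \<and> indep2 v w"
proof -
  have "indep3 u w v" "indep3 v w u"
    using assms indep3_swap12 indep3_swap23 by blast+
  then show ?thesis
    using assms indep3_iff by blast
qed

lemma indep3_imp_indep2_sum:
  assumes "indep3 u v w"
  shows "indep2 u (v + w)"
proof -
  have "indep3 u (v + w) w"
    by (rule indep3_transform [OF assms, where fa = "\<lambda>a b c. a" and fb = "\<lambda>a b c. b"
          and fc = "\<lambda>a b c. b + c"]) (simp_all add: scale_left_distrib algebra_simps)
  then show ?thesis
    using indep3_imp_indep2 by blast
qed

lemma indep2_sum_nonzero: "indep2 u v \<Longrightarrow> u + v \<noteq> 0"
  unfolding indep2_def by (metis scale_one zero_neq_one)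

lemma indep2_add_self:
  assumes "indep2 u w"
  shows "indep2 u (u + w)"
  unfolding indep2_def
proof (intro allI impI)
  fix a b
  assume "a \<cdot> u + b \<cdot> (u + w) = 0"
  then have "(a + b) \<cdot> u + b \<cdot> w = 0"
    by (simp add: scale_left_distrib algebra_simps)
  then have "a + b = 0 \<and> b = 0"
    using assms unfolding indep2_def by blast
  then show "a = 0 \<and> b = 0"
    by auto
qed

lemma indep2_mix:
  assumes "indep2 u w" "1 + m \<noteq> 0"
  shows "indep2 (u + w) (m \<cdot> u + - w)"
  unfolding indep2_def
proof (intro allI impI)
  fix a b
  assume "a \<cdot> (u + w) + b \<cdot> (m \<cdot> u + - w) = 0"
  then have "(a + b * m) \<cdot> u + (a - b) \<cdot> w = 0"
    by (simp add: scale_left_distrib scale_left_diff_distrib algebra_simps)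
  then have "a + b * m = 0 \<and> a - b = 0"
    using assms(1) unfolding indep2_def by blast
  then have "a + b * m = 0" "b = a"
    by auto
  then have "a * (1 + m) = 0"
    by (simp add: algebra_simps)
  then show "a = 0 \<and> b = 0"
    using assms(2) \<open>b = a\<close> by simp
qed

lemma plane_subset_if_indep2:
  assumes "indep2 u v" "u \<in> plane p q" "v \<in> plane p q"
  shows "plane p q \<subseteq> plane u v"
proof -
  have u0: "u \<noteq> 0" and vu: "v \<notin> line u"
    using assms(1) indep2_iff by auto
  show ?thesis
  proof (cases "u \<in> line q")
    case False
    then have "p \<in> plane u q"
      using plane_exchange [of u p q] assms by simp
    then have s1: "plane p q \<subseteq> plane u q"
      by (intro plane_subset_plane) auto
    then have "q \<in> plane v u"
      using plane_exchange [of v q u] vu assms(3) plane_commute by blast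
    then have "plane u q \<subseteq> plane u v"
      using plane_commute by (intro plane_subset_plane) auto
    then show ?thesis
      using s1 by blast
  next
    case True
    then have "q \<in> line u"
      using line_eq_if_mem [OF True u0] by simp
    then have s1: "plane p q \<subseteq> plane p u"
      using line_subset_plane_right [of u p] by (intro plane_subset_plane) auto
    then have "p \<in> plane v u"
      using plane_exchange [of v p u] vu assms(3) by blast
    then have "plane p u \<subseteq> plane u v"
      using plane_commute by (intro plane_subset_plane) auto
    then show ?thesis
      using s1 by blast
  qed
qed

lemma not_indep3_in_plane:
  "u \<in> plane p q \<Longrightarrow> v \<in> plane p q \<Longrightarrow> w \<in> plane p q \<Longrightarrow> \<not> indep3 u v w"
  using plane_subset_if_indep2 indep3_iff by blast

lemma indep3_extend:
  "indep2 p q \<Longrightarrow> p \<in> plane x y \<Longrightarrow> q \<in> plane x y \<Longrightarrow> w \<notin> plane x y \<Longrightarrow> indep3 p q w"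
  using plane_subset_if_indep2 plane_subset_plane indep3_iff by blast

lemma not_indep2_imp_line: "\<not> indep2 u v \<Longrightarrow> u \<noteq> 0 \<Longrightarrow> v \<in> line u"
  using indep2_iff by blast

lemma not_indep3_imp_plane: "\<not> indep3 u v w \<Longrightarrow> indep2 u v \<Longrightarrow> w \<in> plane u v"
  using indep3_iff by blast

lemma indep2_not_in_line: "indep2 p q \<Longrightarrow> p \<in> line w \<Longrightarrow> q \<in> line w \<Longrightarrow> False"
  using indep2_iff line_eq_if_mem by metis

lemma indep2_line_cong:
  assumes "indep2 u v" "line u' = line u" "line v' = line v"
  shows "indep2 u' v'"
proof -
  have "u' \<noteq> 0"
    using assms(1,2) indep2_nonzero line_eq_0_iff by metis
  moreover have "v' \<notin> line u'"
    using assms line_subset_line [of v' u] line_self [of v] indep2_iff by blast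
  ultimately show ?thesis
    using indep2_iff by blast
qed

lemma indep3_line_cong:
  assumes "indep3 u v w" "line u' = line u" "line v' = line v" "line w' = line w"
  shows "indep3 u' v' w'"
proof -
  have "indep2 u' v'"
    using assms(1-3) indep3_imp_indep2 indep2_line_cong by blast
  moreover have "u' \<in> plane u v" "v' \<in> plane u v"
    using assms(2,3) line_self [of u'] line_self [of v'] line_subset_plane_left line_subset_plane_right
    by blast+
  then have "plane u' v' \<subseteq> plane u v"
    by (rule plane_subset_plane)
  then have "w' \<notin> plane u' v'"
    using assms(1,4) line_subset_line [of w' "u'"] line_self [of w] indep3_iff line_subset_plane
    by blast
  ultimately show ?thesis
    using indep3_iff by blast
qed

lemma indep2_line_inter:
  assumes "indep2 u v"
  shows "line u \<inter> line v = {0}"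
proof -
  have False if "z \<in> line u" "z \<in> line v" "z \<noteq> 0" for z
  proof -
    have "line u = line z" "line v = line z"
      using line_eq_if_mem [of z u] line_eq_if_mem [of z v] that by simp_all
    then show False
      using indep2_not_in_line [OF assms, of z] line_self by blast
  qed
  then show ?thesis
    by auto
qed

lemma common_plane_if_not_indep3:
  assumes lines: "\<And>x. \<exists>w. L x = line w"
    and no_indep3: "\<And>a b c u v w. L a = line u \<Longrightarrow> L b = line v \<Longrightarrow> L c = line w \<Longrightarrow> \<not> indep3 u v w"
  shows "\<exists>u v. \<forall>x. L x \<subseteq> plane u v"
proof (cases "\<exists>x1 x2 u v. L x1 = line u \<and> L x2 = line v \<and> indep2 u v")
  case True
  then obtain x1 x2 u v where uv: "L x1 = line u" "L x2 = line v" "indep2 u v"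
    by blast
  have "L x \<subseteq> plane u v" for x
  proof -
    obtain w where w: "L x = line w"
      using lines by blast
    then have "w \<in> plane u v"
      using no_indep3 [OF uv(1,2) w] uv(3) indep3_iff by blast
    then show ?thesis
      using w line_subset_plane by simp
  qed
  then show ?thesis
    by blast
next
  case no_indep2: False
  show ?thesis
  proof (cases "\<exists>x u. L x = line u \<and> u \<noteq> 0")
    case True
    then obtain x0 u where u: "L x0 = line u" "u \<noteq> 0"
      by blast
    have "L x \<subseteq> plane u 0" for x
    proof -
      obtain w where w: "L x = line w"
        using lines by blast
      then have "w \<in> line u"
        using no_indep2 u not_indep2_imp_line by blast
      then show ?thesis
        using w line_subset_line by simp
    qed
    then show ?thesis
      by blast
  next
    case False
    then have "L x \<subseteq> plane 0 0" for x
      using lines [of x] by fastforce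
    then show ?thesis
      by blast
  qed
qed

lemma plane_inter_plane_subset_line:
  assumes "A + B = C + D" "indep3 A B C"
  shows "plane A B \<inter> plane C D \<subseteq> line (A + B)"
proof
  fix z
  assume "z \<in> plane A B \<inter> plane C D"
  then obtain a b c d where z1: "z = a \<cdot> A + b \<cdot> B" and z2: "z = c \<cdot> C + d \<cdot> D"
    unfolding Int_iff plane_iff by blast
  have D: "D = A + B - C"
    using assms(1) by (simp add: algebra_simps)
  have "(a - d) \<cdot> A + (b - d) \<cdot> B + (d - c) \<cdot> C = a \<cdot> A + b \<cdot> B - (c \<cdot> C + d \<cdot> D)"
    unfolding D by (simp add: scale_left_diff_distrib algebra_simps)
  also have "\<dots> = 0"
    using z1 z2 by simp
  finally have "a - d = 0 \<and> b - d = 0"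
    using assms(2) unfolding indep3_def by blast
  then have "z = a \<cdot> (A + B)"
    using z1 by simp
  then show "z \<in> line (A + B)"
    unfolding line_iff by blast
qed


text \<open>Comparing \<open>f (l x)\<close>, \<open>f (l p)\<close> and \<open>f (l (x + p))\<close> forces a common factor.\<close>

lemma line_factor_eq:
  assumes add: "\<And>x y. f (x + y) = f x + f y"
    and preserves_lines: "\<And>l x. f (scale' l x) \<in> line (f x)"
    and distrib: "scale' l (x + p) = scale' l x + scale' l p"
    and "indep2 (f p) (f x)" "f (scale' l p) = m \<cdot> f p"
  shows "f (scale' l x) = m \<cdot> f x"
proof -
  obtain m1 m2 where m1: "f (scale' l x) = m1 \<cdot> f x"
    and m2: "f (scale' l (x + p)) = m2 \<cdot> f (x + p)"
    using preserves_lines [of l x] preserves_lines [of l "x + p"] unfolding line_iff by blast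
  have "m2 \<cdot> (f x + f p) = m1 \<cdot> f x + m \<cdot> f p"
    using m1 m2 assms(5) add distrib by simp
  then have "(m2 - m) \<cdot> f p + (m2 - m1) \<cdot> f x = 0"
    by (simp add: scale_left_diff_distrib algebra_simps)
  then have "m2 - m = 0 \<and> m2 - m1 = 0"
    using assms(4) unfolding indep2_def by blast
  then show ?thesis
    using m1 by auto
qed

lemma line_factor_eq_all:
  assumes add: "\<And>x y. f (x + y) = f x + f y"
    and preserves_lines: "\<And>l x. f (scale' l x) \<in> line (f x)"
    and distrib: "\<And>l x y. scale' l (x + y) = scale' l x + scale' l y"
    and indep: "indep2 (f p) (f t)" and factor: "f (scale' l p) = m \<cdot> f p"
  shows "f (scale' l x) = m \<cdot> f x"
proof -
  have factor_eq: "f (scale' l y) = m \<cdot> f y" if "indep2 (f p) (f y)" for y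
    using line_factor_eq [where f = f and scale' = scale', OF add preserves_lines distrib that factor] .
  show ?thesis
  proof (cases "f x = 0 \<or> indep2 (f p) (f x)")
    case True
    then show ?thesis
      using preserves_lines [of l x] factor_eq by auto
  next
    case False
    have p0: "f p \<noteq> 0"
      using indep indep2_nonzero by blast
    then have fx: "f x \<in> line (f p)"
      using False not_indep2_imp_line by blast
    have "f x + f t \<notin> line (f p)"
    proof
      assume "f x + f t \<in> line (f p)"
      then have "f x + f t + - f x \<in> line (f p)"
        using fx line_add line_neg by blast
      then show False
        using indep indep2_iff by simp
    qed
    then have "indep2 (f p) (f (x + t))"
      using indep2_iff p0 add by simp
    then have "f (scale' l x) + f (scale' l t) = m \<cdot> f x + m \<cdot> f t"
      using factor_eq [of "x + t"] add distrib by simp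
    then show ?thesis
      using factor_eq [OF indep] by simp
  qed
qed

lemma semilinear_if_preserves_lines:
  fixes scale' :: "'k1::division_ring \<Rightarrow> 'x::ab_group_add \<Rightarrow> 'x"
  assumes "left_vs scale'"
    and add: "\<And>x y. f (x + y) = f x + f y"
    and preserves_lines: "\<And>l x. f (scale' l x) \<in> line (f x)"
    and indep: "indep2 (f p) (f t)"
  shows "\<exists>\<sigma>. divring_hom \<sigma> \<and> (\<forall>l x. f (scale' l x) = \<sigma> l \<cdot> f x)"
proof -
  interpret V1: left_vector_space scale'
    by (rule left_vector_space.intro) fact
  have p0: "f p \<noteq> 0"
    using indep indep2_nonzero by blast
  define \<sigma> where "\<sigma> l = (THE m. f (scale' l p) = m \<cdot> f p)" for l
  have \<sigma>p: "f (scale' l p) = \<sigma> l \<cdot> f p" for l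
  proof -
    obtain m where m: "f (scale' l p) = m \<cdot> f p"
      using preserves_lines [of l p] unfolding line_iff by blast
    have "\<sigma> l = m"
      unfolding \<sigma>_def by (rule the_equality) (use m scale_right_cancel p0 in auto)
    then show ?thesis
      using m by simp
  qed
  have all: "f (scale' l x) = \<sigma> l \<cdot> f x" for l x
    using line_factor_eq_all [where f = f and scale' = scale', OF add preserves_lines
        V1.scale_right_distrib indep \<sigma>p] .
  have "divring_hom \<sigma>"
    unfolding divring_hom_def
  proof (intro conjI allI)
    fix l1 l2
    have "\<sigma> (l1 + l2) \<cdot> f p = f (scale' l1 p + scale' l2 p)"
      using \<sigma>p [of "l1 + l2"] by (simp add: V1.scale_left_distrib)
    also have "\<dots> = (\<sigma> l1 + \<sigma> l2) \<cdot> f p"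
      using add \<sigma>p by (simp add: scale_left_distrib)
    finally show "\<sigma> (l1 + l2) = \<sigma> l1 + \<sigma> l2"
      using scale_right_cancel p0 by blast
    have "\<sigma> (l1 * l2) \<cdot> f p = f (scale' l1 (scale' l2 p))"
      using \<sigma>p [of "l1 * l2"] by simp
    also have "\<dots> = \<sigma> l1 \<cdot> f (scale' l2 p)"
      by (rule all)
    also have "\<dots> = (\<sigma> l1 * \<sigma> l2) \<cdot> f p"
      using \<sigma>p by simp
    finally show "\<sigma> (l1 * l2) = \<sigma> l1 * \<sigma> l2"
      using scale_right_cancel p0 by blast
  next
    have "\<sigma> 1 \<cdot> f p = 1 \<cdot> f p"
      using \<sigma>p [of 1] by simp
    then show "\<sigma> 1 = 1"
      using scale_right_cancel p0 by blast
  qed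
  then show ?thesis
    using all by blast
qed

end

section \<open>Lifting a point-valued map to an additive map\<close>

text \<open>\<open>Q x\<close> stands for \<open>g (\<bbbK>\<^sub>1 x)\<close>; only the additive group of the source space is
  needed to construct the additive lift.\<close>

locale point_map = left_vector_space scale
  for scale :: "'k::division_ring \<Rightarrow> 'e::ab_group_add \<Rightarrow> 'e" (infixr "\<cdot>" 75) +
  fixes Q :: "'x::ab_group_add \<Rightarrow> 'e set"
  assumes Q_line: "\<exists>w. Q x = line w"
    and Q_minus: "Q (- x) = Q x"
    and Q_add: "Q x = line u \<Longrightarrow> Q y = line v \<Longrightarrow> Q (x + y) \<subseteq> plane u v"
    and Q_rank: "\<exists>a b c u v w. Q a = line u \<and> Q b = line v \<and> Q c = line w \<and> indep3 u v w"
begin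

definition rep :: "'x \<Rightarrow> 'e \<Rightarrow> bool"
  where "rep x x' \<longleftrightarrow> Q x = line x'"

lemma rep_exists: "\<exists>x'. rep x x'"
  using Q_line unfolding rep_def by blast

lemma rep_add: "rep x u \<Longrightarrow> rep y v \<Longrightarrow> Q (x + y) \<subseteq> plane u v"
  unfolding rep_def by (rule Q_add)

lemma rep_neg: "rep x u \<Longrightarrow> rep (- x) (- u)"
  unfolding rep_def by (simp add: Q_minus)

lemma rep_zero_iff: "rep x 0 \<longleftrightarrow> Q x = {0}"
  unfolding rep_def by simp

lemma rep_scale: "rep x u \<Longrightarrow> m \<noteq> 0 \<Longrightarrow> rep x (m \<cdot> u)"
  unfolding rep_def by (simp add: line_scale_eq)

lemma rep_in: "rep x u \<Longrightarrow> u \<in> Q x"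
  unfolding rep_def by simp

lemma rep_line_eq: "rep x u \<Longrightarrow> rep x v \<Longrightarrow> line u = line v"
  unfolding rep_def by simp

lemma rep_nonzero_iff: "rep x u \<Longrightarrow> u \<noteq> 0 \<longleftrightarrow> Q x \<noteq> {0}"
  unfolding rep_def using line_eq_0_iff by metis

lemma rep_of_subset:
  assumes "Q s \<subseteq> line w" "Q s \<noteq> {0}"
  shows "rep s w"
proof -
  obtain z where z: "rep s z"
    using rep_exists by blast
  then have "z \<noteq> 0" "z \<in> line w"
    using assms rep_nonzero_iff rep_in by blast+
  then have "line z = line w"
    using line_eq_if_mem by blast
  then show ?thesis
    using z unfolding rep_def by simp
qed

lemma rep_add_not_in_line:
  assumes "rep x u" "rep y v" "indep2 u v" "rep (x + y) w"
  shows "w \<notin> line v"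
proof
  assume "w \<in> line v"
  have "Q (x + y + - y) \<subseteq> plane w (- v)"
    using assms(2,4) rep_neg rep_add by blast
  also have "\<dots> \<subseteq> line v"
    using \<open>w \<in> line v\<close> by (intro plane_subset_line line_neg line_self)
  finally have "Q x \<subseteq> line v"
    by simp
  then have "u \<in> line v"
    using rep_in [OF assms(1)] by blast
  then show False
    by (rule indep2_not_in_line [OF assms(3) _ line_self])
qed

lemma rep_add_nonzero:
  assumes "rep x u" "rep y v" "indep2 u v"
  shows "Q (x + y) \<noteq> {0}"
  using rep_add_not_in_line [OF assms] rep_zero_iff zero_in_line by blast

lemma rep_sum_two_ways:
  assumes "s = p1 + q1" "s = p2 + q2" "rep p1 A" "rep q1 B" "rep p2 C" "rep q2 D"
    and "S = A + B" "S = C + D" "indep3 A B C"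
  shows "rep s S"
  unfolding assms(7)
proof (rule rep_of_subset)
  have "Q s \<subseteq> plane A B"
    using assms(1,3,4) rep_add by blast
  moreover have "Q s \<subseteq> plane C D"
    using assms(2,5,6) rep_add by blast
  moreover have "A + B = C + D"
    using assms(7,8) by simp
  ultimately show "Q s \<subseteq> line (A + B)"
    using plane_inter_plane_subset_line [OF _ assms(9)] by blast
  have "indep2 A B"
    using assms(9) indep3_imp_indep2 by blast
  then show "Q s \<noteq> {0}"
    using rep_add_nonzero assms(1,3,4) by blast
qed

lemma Q_add_null:
  assumes "Q n = {0}"
  shows "Q (x + n) = Q x"
proof -
  obtain u w where u: "rep x u" and w: "rep (x + n) w"
    using rep_exists by blast
  have "rep n 0" "rep (- n) 0"
    using assms rep_zero_iff Q_minus by auto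
  then have "Q (x + n) \<subseteq> plane u 0" "Q (x + n + - n) \<subseteq> plane w 0"
    using u w rep_add by blast+
  then show ?thesis
    using u w unfolding rep_def by auto
qed

lemma Q_sum_subset_plane:
  assumes "rep x u" "rep y v"
  shows "Q x \<union> Q y \<union> Q (x + y) \<subseteq> plane u v"
proof -
  have "Q x \<subseteq> plane u v" "Q y \<subseteq> plane u v"
    using assms line_subset_plane_left line_subset_plane_right unfolding rep_def by simp_all
  then show ?thesis
    using rep_add [OF assms] by blast
qed

lemma Q_add_null_if_opposite:
  assumes "rep p u" "rep q (- u)" "Q (p + q) \<subseteq> line w" "indep2 w u"
  shows "Q (p + q) = {0}"
proof -
  have "Q (p + q) \<subseteq> plane u u"
    using rep_add [OF assms(1,2)] by simp
  then have "Q (p + q) \<subseteq> line w \<inter> line u"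
    using assms(3) plane_subset_line [of u u u] by auto
  then have "Q (p + q) \<subseteq> {0}"
    using indep2_line_inter [OF assms(4)] by simp
  then show ?thesis
    using rep_exists [of "p + q"] unfolding rep_def by auto
qed

text \<open>Given a base point \<open>a\<close> with representative \<open>a'\<close>, every \<open>x\<close> with \<open>a' \<notin> Q x\<close>
  has a unique representative \<open>x'\<close> such that \<open>a' + x'\<close> represents \<open>a + x\<close>; this is
  \<open>lift a a' x\<close>, which carries no meaning for other \<open>x\<close>.\<close>

definition off_base :: "'e \<Rightarrow> 'x \<Rightarrow> bool"
  where "off_base a' x \<longleftrightarrow> a' \<notin> Q x"

definition lift :: "'x \<Rightarrow> 'e \<Rightarrow> 'x \<Rightarrow> 'e"
  where "lift a a' x = (THE x'. rep x x' \<and> rep (a + x) (a' + x'))"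

end

locale point_map_base = point_map +
  fixes a a'
  assumes rep_base: "rep a a'" and base_nonzero: "a' \<noteq> 0"
begin

lemma off_base_iff:
  assumes "rep x x'"
  shows "off_base a' x \<longleftrightarrow> x' = 0 \<or> indep2 a' x'"
proof (cases "x' = 0")
  case True
  then show ?thesis
    using assms base_nonzero unfolding off_base_def rep_def by simp
next
  case False
  then have "indep2 x' a' \<longleftrightarrow> a' \<notin> line x'"
    using indep2_iff by simp
  then show ?thesis
    using False assms indep2_commute unfolding off_base_def rep_def by blast
qed

lemma lift_exists:
  assumes "off_base a' x"
  shows "\<exists>x'. rep x x' \<and> rep (a + x) (a' + x')"
proof (cases "Q x = {0}")
  case True
  then have "rep x 0" "rep (a + x) (a' + 0)"
    using Q_add_null rep_base rep_zero_iff unfolding rep_def by auto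
  then show ?thesis
    by blast
next
  case False
  obtain x'' where x'': "rep x x''"
    using rep_exists by blast
  then have i2: "indep2 a' x''"
    using assms False off_base_iff rep_zero_iff by blast
  obtain w where w: "rep (a + x) w"
    using rep_exists by blast
  then have "w \<in> plane a' x''"
    using rep_add [OF rep_base x''] rep_in by blast
  then obtain p q where pq: "w = p \<cdot> a' + q \<cdot> x''"
    unfolding plane_iff by blast
  have "w \<notin> line x''"
    using rep_add_not_in_line [OF rep_base x'' i2 w] .
  then have p0: "p \<noteq> 0"
    using pq line_scale [OF line_self] by auto
  have "w \<notin> line a'"
    using rep_add_not_in_line [OF x'' rep_base indep2_commute [OF i2]] w by (simp add: add.commute)
  then have q0: "q \<noteq> 0"
    using pq line_scale [OF line_self] by auto
  have "rep x ((inverse p * q) \<cdot> x'')"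
    using x'' p0 q0 by (intro rep_scale) auto
  moreover have "rep (a + x) (inverse p \<cdot> w)"
    using w p0 by (intro rep_scale) auto
  moreover have "inverse p \<cdot> w = a' + (inverse p * q) \<cdot> x''"
    using p0 unfolding pq by simp
  ultimately show ?thesis
    by auto
qed

lemma lift_unique:
  assumes "off_base a' x" "rep x x1" "rep (a + x) (a' + x1)" "rep x x2" "rep (a + x) (a' + x2)"
  shows "x1 = x2"
proof (cases "x1 = 0")
  case True
  then show ?thesis
    using assms(2,4) unfolding rep_def by (simp add: line_eq_0_iff)
next
  case False
  then have i2: "indep2 a' x1"
    using assms(1,2) off_base_iff by blast
  have "x2 \<in> line x1" "a' + x2 \<in> line (a' + x1)"
    using rep_in [OF assms(4)] rep_in [OF assms(5)] assms(2,3) unfolding rep_def by simp_all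
  then obtain m n where m: "x2 = m \<cdot> x1" and n: "a' + x2 = n \<cdot> (a' + x1)"
    unfolding line_iff by blast
  have "(1 - n) \<cdot> a' + (m - n) \<cdot> x1 = (a' + x2) - n \<cdot> (a' + x1)"
    by (simp add: m scale_left_diff_distrib algebra_simps)
  also have "\<dots> = 0"
    using n by simp
  finally have "1 - n = 0 \<and> m - n = 0"
    using i2 unfolding indep2_def by blast
  then show ?thesis
    using m by simp
qed

lemma lift_rep:
  assumes "off_base a' x"
  shows "rep x (lift a a' x)" and "rep (a + x) (a' + lift a a' x)"
proof -
  obtain x' where x': "rep x x' \<and> rep (a + x) (a' + x')"
    using lift_exists [OF assms] by blast
  have "lift a a' x = x'"
    unfolding lift_def by (rule the_equality) (use x' lift_unique [OF assms] in blast)+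
  then show "rep x (lift a a' x)" "rep (a + x) (a' + lift a a' x)"
    using x' by simp_all
qed

lemma lift_eqI:
  assumes "off_base a' x" "rep x x'" "rep (a + x) (a' + x')"
  shows "lift a a' x = x'"
  by (rule lift_unique [OF assms(1) lift_rep(1,2) [OF assms(1)] assms(2,3)])

lemma lift_null:
  assumes "Q n = {0}"
  shows "off_base a' n" and "lift a a' n = 0"
proof -
  show off: "off_base a' n"
    using assms base_nonzero unfolding off_base_def by simp
  have "rep n 0" "rep (a + n) (a' + 0)"
    using assms rep_zero_iff Q_add_null [OF assms, of a] rep_base unfolding rep_def by auto
  then show "lift a a' n = 0"
    using lift_eqI [OF off] by blast
qed

lemma lift_nonzero:
  assumes "off_base a' x" "Q x \<noteq> {0}"
  shows "lift a a' x \<noteq> 0 \<and> indep2 a' (lift a a' x)"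
proof -
  have r: "rep x (lift a a' x)"
    using lift_rep(1) [OF assms(1)] .
  then have "lift a a' x \<noteq> 0"
    using assms(2) rep_nonzero_iff by blast
  then show ?thesis
    using off_base_iff [OF r] assms(1) by blast
qed

lemma off_base_indep2: "off_base a' x \<Longrightarrow> lift a a' x \<noteq> 0 \<Longrightarrow> indep2 a' (lift a a' x)"
  using off_base_iff [OF lift_rep(1)] by blast

lemma lift_add_null:
  assumes "Q n = {0}" "off_base a' y"
  shows "off_base a' (y + n)" and "lift a a' (y + n) = lift a a' y"
proof -
  have Q: "Q (y + n) = Q y" "Q (a + (y + n)) = Q (a + y)"
    using Q_add_null [OF assms(1)] by (simp_all add: add.assoc [symmetric])
  then show off: "off_base a' (y + n)"
    using assms(2) unfolding off_base_def by simp
  show "lift a a' (y + n) = lift a a' y"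
    using lift_eqI [OF off] lift_rep [OF assms(2)] Q unfolding rep_def by simp
qed

lemma exists_lift_off_plane:
  assumes "a' \<in> plane u v"
  shows "\<exists>c. off_base a' c \<and> lift a a' c \<notin> plane u v"
proof -
  obtain c1 c2 c3 w1 w2 w3 where "rep c1 w1" "rep c2 w2" "rep c3 w3" "indep3 w1 w2 w3"
    using Q_rank unfolding rep_def by blast
  then obtain c w where cw: "rep c w" "w \<notin> plane u v"
    using not_indep3_in_plane [of w1 u v w2 w3] by blast
  have off: "off_base a' c"
    unfolding off_base_def
  proof
    assume "a' \<in> Q c"
    then have "a' \<in> line w"
      using cw(1) unfolding rep_def by simp
    then have "line a' = line w"
      using base_nonzero by (rule line_eq_if_mem)
    then show False
      using cw(2) line_subset_plane [OF assms] line_self [of w] by blast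
  qed
  have "w \<in> line (lift a a' c)"
    using rep_line_eq [OF lift_rep(1) [OF off] cw(1)] by simp
  then have "lift a a' c \<notin> plane u v"
    using cw(2) line_subset_plane by blast
  then show ?thesis
    using off by blast
qed


lemma lift_minus:
  assumes "off_base a' y"
  shows "off_base a' (- y)" and "lift a a' (- y) = - lift a a' y"
proof -
  show off: "off_base a' (- y)"
    using assms Q_minus unfolding off_base_def by simp
  show "lift a a' (- y) = - lift a a' y"
  proof (cases "Q y = {0}")
    case True
    then show ?thesis
      using lift_null(2) [of y] lift_null(2) [of "- y"] Q_minus by simp
  next
    case False
    define y' where "y' = lift a a' y"
    have ry: "rep y y'" and ray: "rep (a + y) (a' + y')"
      using lift_rep [OF assms] unfolding y'_def by auto
    have "indep2 a' y'"
      using lift_nonzero [OF assms False] unfolding y'_def by simp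
    obtain c where off_c: "off_base a' c" and c: "lift a a' c \<notin> plane a' y'"
      using exists_lift_off_plane [of a' y'] by auto
    define c' where "c' = lift a a' c"
    have rc: "rep c c'" and rac: "rep (a + c) (a' + c')"
      using lift_rep [OF off_c] unfolding c'_def by auto
    have i3: "indep3 a' c' y'"
      using \<open>indep2 a' y'\<close> c indep3_iff indep3_swap23 unfolding c'_def by blast
    have "indep3 (a' + c') (- (a' + y')) c'"
      by (rule indep3_transform [OF i3, where fa = "\<lambda>a b c. a - b" and fb = "\<lambda>a b c. a + c"
            and fc = "\<lambda>a b c. - b"]) (simp_all add: scale_left_distrib scale_left_diff_distrib algebra_simps)
    then have s1: "rep (c - y) (c' - y')"
      by (rule rep_sum_two_ways [OF _ _ rac rep_neg [OF ray] rc rep_neg [OF ry], rotated -1])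
        (simp_all add: algebra_simps)
    have "indep3 (a' + c') (- y') a'"
      by (rule indep3_transform [OF i3, where fa = "\<lambda>a b c. a + c" and fb = "\<lambda>a b c. a"
            and fc = "\<lambda>a b c. - b"]) (simp_all add: scale_left_distrib algebra_simps)
    then have s2: "rep (a + (c - y)) (a' + (c' - y'))"
      by (rule rep_sum_two_ways [OF _ _ rac rep_neg [OF ry] rep_base s1, rotated -1])
        (simp_all add: algebra_simps)
    have "indep3 (a' + (c' - y')) (- c') a'"
      by (rule indep3_transform [OF i3, where fa = "\<lambda>a b c. a + c" and fb = "\<lambda>a b c. a - b"
            and fc = "\<lambda>a b c. - a"]) (simp_all add: scale_left_distrib scale_left_diff_distrib algebra_simps)
    then have "rep (a + - y) (a' + - y')"
      by (rule rep_sum_two_ways [OF _ _ s2 rep_neg [OF rc] rep_base rep_neg [OF ry], rotated -1])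
        (simp_all add: algebra_simps)
    then show ?thesis
      using lift_eqI [OF off rep_neg [OF ry]] unfolding y'_def by simp
  qed
qed

lemma lift_add_indep3:
  assumes "off_base a' x" "off_base a' y" "indep3 a' (lift a a' x) (lift a a' y)"
  shows "off_base a' (x + y)" and "lift a a' (x + y) = lift a a' x + lift a a' y"
proof -
  define x' y' where "x' = lift a a' x" and "y' = lift a a' y"
  have rx: "rep x x'" and rax: "rep (a + x) (a' + x')"
    using lift_rep [OF assms(1)] unfolding x'_def by auto
  have ry: "rep y y'"
    using lift_rep [OF assms(2)] unfolding y'_def by auto
  have ramy: "rep (a + - y) (a' + - y')"
    using lift_rep(2) [OF lift_minus(1) [OF assms(2)]] lift_minus(2) [OF assms(2)]
    unfolding y'_def by simp
  have i3: "indep3 a' x' y'"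
    using assms(3) unfolding x'_def y'_def .
  have "indep3 (a' + x') (- (a' + - y')) x'"
    by (rule indep3_transform [OF i3, where fa = "\<lambda>a b c. a - b" and fb = "\<lambda>a b c. a + c"
          and fc = "\<lambda>a b c. b"]) (simp_all add: scale_left_distrib scale_left_diff_distrib algebra_simps)
  then have s1: "rep (x + y) (x' + y')"
    by (rule rep_sum_two_ways [OF _ _ rax rep_neg [OF ramy] rx ry, rotated -1])
      (simp_all add: algebra_simps)
  have "indep2 a' (x' + y')"
    using indep3_imp_indep2_sum [OF i3] .
  then show off: "off_base a' (x + y)"
    using off_base_iff [OF s1] by blast
  have "indep3 (a' + x') y' a'"
    by (rule indep3_transform [OF i3, where fa = "\<lambda>a b c. a + c" and fb = "\<lambda>a b c. a"
          and fc = "\<lambda>a b c. b"]) (simp_all add: scale_left_distrib algebra_simps)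
  then have "rep (a + (x + y)) (a' + (x' + y'))"
    by (rule rep_sum_two_ways [OF _ _ rax ry rep_base s1, rotated -1]) (simp_all add: algebra_simps)
  then show "lift a a' (x + y) = lift a a' x + lift a a' y"
    using lift_eqI [OF off s1] unfolding x'_def y'_def by simp
qed

text \<open>For the remaining cases, shift \<open>x\<close> and \<open>y\<close> by \<open>c\<close> and \<open>- c\<close>, where the lift of \<open>c\<close>
  leaves the plane of the lifts, so that the previous case applies.\<close>

lemma lift_add_shift:
  assumes "off_base a' x" "off_base a' y" "off_base a' c"
    and "indep3 a' (lift a a' x) (lift a a' c)" "indep3 a' (lift a a' y) (- lift a a' c)"
  shows "off_base a' (x + c)" "lift a a' (x + c) = lift a a' x + lift a a' c"
    and "off_base a' (y + - c)" "lift a a' (y + - c) = lift a a' y + - lift a a' c"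
proof -
  show "off_base a' (x + c)" "lift a a' (x + c) = lift a a' x + lift a a' c"
    using lift_add_indep3 [OF assms(1,3,4)] by auto
  have mc: "off_base a' (- c)" "lift a a' (- c) = - lift a a' c"
    using lift_minus [OF assms(3)] by auto
  then have "indep3 a' (lift a a' y) (lift a a' (- c))"
    using assms(5) by simp
  then show "off_base a' (y + - c)" "lift a a' (y + - c) = lift a a' y + - lift a a' c"
    using lift_add_indep3 [OF assms(2) mc(1)] mc(2) by simp_all
qed

lemma lift_add_indep2:
  assumes "off_base a' x" "off_base a' y" "off_base a' (x + y)"
    and "indep2 (lift a a' x) (lift a a' y)"
  shows "lift a a' (x + y) = lift a a' x + lift a a' y"
proof (cases "indep3 a' (lift a a' x) (lift a a' y)")
  case True
  then show ?thesis
    using lift_add_indep3(2) assms(1,2) by blast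
next
  case False
  define x' y' where "x' = lift a a' x" and "y' = lift a a' y"
  have rx: "rep x x'"
    using lift_rep(1) [OF assms(1)] unfolding x'_def .
  have ry: "rep y y'"
    using lift_rep(1) [OF assms(2)] unfolding y'_def .
  have i2: "indep2 x' y'"
    using assms(4) unfolding x'_def y'_def .
  then have "x' \<noteq> 0" "y' \<noteq> 0"
    using indep2_nonzero by auto
  then have ax: "indep2 a' x'" and ay: "indep2 a' y'"
    using off_base_indep2 assms(1,2) unfolding x'_def y'_def by auto
  have "\<not> indep3 x' y' a'"
    using False indep3_rotate unfolding x'_def y'_def by blast
  then have apl: "a' \<in> plane x' y'"
    using i2 not_indep3_imp_plane by blast
  obtain c where off_c: "off_base a' c" and c: "lift a a' c \<notin> plane x' y'"
    using exists_lift_off_plane [OF apl] by auto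
  define c' where "c' = lift a a' c"
  have cn: "c' \<notin> plane x' y'"
    using c unfolding c'_def .
  have "- c' \<notin> plane x' y'"
    using cn plane_neg by force
  then have "indep3 a' x' c'" "indep3 a' y' (- c')"
    using indep3_extend [OF ax apl _ cn] indep3_extend [OF ay apl] by simp_all
  then have A1: "off_base a' (x + c)" "lift a a' (x + c) = x' + c'"
    and A2: "off_base a' (y + - c)" "lift a a' (y + - c) = y' + - c'"
    using lift_add_shift [OF assms(1,2) off_c] unfolding x'_def y'_def c'_def by simp_all
  have "indep3 x' y' c'"
    using i2 cn indep3_iff by blast
  then have "indep3 (x' + c') (y' + - c') x'"
    by (rule indep3_transform [where fa = "\<lambda>a b c. a + c" and fb = "\<lambda>a b c. b"
          and fc = "\<lambda>a b c. a - b"]) (simp_all add: scale_left_distrib scale_left_diff_distrib algebra_simps)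
  moreover have "rep (x + c) (x' + c')" "rep (y + - c) (y' + - c')"
    using lift_rep(1) [OF A1(1)] lift_rep(1) [OF A2(1)] A1(2) A2(2) by simp_all
  ultimately have rxy: "rep (x + y) (x' + y')"
    using rx ry by (intro rep_sum_two_ways [of "x + y" "x + c" "y + - c" x y]) (simp_all add: algebra_simps)
  have "indep2 a' (x' + y')"
    using off_base_iff [OF rxy] assms(3) indep2_sum_nonzero [OF i2] by blast
  moreover have "x' + y' \<in> plane x' y'"
    by (intro plane_add) auto
  moreover have "x' + c' \<notin> plane x' y'"
    using cn plane_add_cancel_left [OF left_in_plane] by blast
  ultimately have "indep3 a' (x' + y') (x' + c')"
    using indep3_extend [OF _ apl] by blast
  then have "indep3 a' (x' + c') (y' + - c')"
    by (rule indep3_transform [where fa = "\<lambda>a b c. a" and fb = "\<lambda>a b c. c"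
          and fc = "\<lambda>a b c. b - c"]) (simp_all add: scale_left_distrib scale_left_diff_distrib algebra_simps)
  then have "lift a a' (x + c + (y + - c)) = lift a a' (x + c) + lift a a' (y + - c)"
    using lift_add_indep3(2) [OF A1(1) A2(1)] A1(2) A2(2) by simp
  moreover have "x + c + (y + - c) = x + y"
    by (simp add: algebra_simps)
  ultimately show ?thesis
    using A1(2) A2(2) unfolding x'_def y'_def by (simp add: algebra_simps)
qed

lemma lift_add_collinear:
  assumes "off_base a' x" "off_base a' y" "lift a a' x \<noteq> 0" "lift a a' y \<noteq> 0"
    and "lift a a' y \<in> line (lift a a' x)"
  shows "lift a a' (x + y) = lift a a' x + lift a a' y"
proof -
  define x' y' where "x' = lift a a' x" and "y' = lift a a' y"
  have rx: "rep x x'"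
    using lift_rep(1) [OF assms(1)] unfolding x'_def .
  have ry: "rep y y'"
    using lift_rep(1) [OF assms(2)] unfolding y'_def .
  obtain m where m: "y' = m \<cdot> x'"
    using assms(5) unfolding x'_def y'_def line_iff by blast
  have ax: "indep2 a' x'" and ay: "indep2 a' y'"
    using off_base_indep2 assms(1-4) unfolding x'_def y'_def by auto
  have "Q (x + y) \<subseteq> plane x' y'"
    by (rule rep_add [OF rx ry])
  also have "\<dots> \<subseteq> line x'"
    using assms(5) unfolding x'_def y'_def by (intro plane_subset_line) auto
  finally have Qxy: "Q (x + y) \<subseteq> line x'" .
  have "a' \<notin> line x'"
    using assms(1) rx unfolding off_base_def rep_def by simp
  then have off: "off_base a' (x + y)"
    using Qxy unfolding off_base_def by blast
  obtain c where off_c: "off_base a' c" and c: "lift a a' c \<notin> plane a' x'"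
    using exists_lift_off_plane [of a' x'] by auto
  define c' where "c' = lift a a' c"
  have cn: "c' \<notin> plane a' x'"
    using c unfolding c'_def .
  have i3x: "indep3 a' x' c'"
    using ax cn indep3_iff by blast
  have "y' \<in> plane a' x'" "- c' \<notin> plane a' x'"
    using assms(5) line_subset_plane_right [of x' a'] cn plane_neg unfolding x'_def y'_def
    by force+
  then have "indep3 a' y' (- c')"
    using indep3_extend [OF ay left_in_plane [of a' x']] by blast
  then have A1: "off_base a' (x + c)" "lift a a' (x + c) = x' + c'"
    and A2: "off_base a' (y + - c)" "lift a a' (y + - c) = y' + - c'"
    using lift_add_shift [OF assms(1,2) off_c] i3x unfolding x'_def y'_def c'_def by simp_all
  have sum: "x + c + (y + - c) = x + y"
    by (simp add: algebra_simps)
  have xc: "indep2 x' c'"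
    using i3x indep3_imp_indep2 by blast
  show ?thesis
  proof (cases "x' + y' = 0")
    case False
    have "x' + y' = (1 + m) \<cdot> x'"
      using m by (simp add: scale_left_distrib)
    then have "1 + m \<noteq> 0"
      using False by auto
    then have "indep2 (x' + c') (y' + - c')"
      using indep2_mix [OF xc] m by simp
    then have "lift a a' (x + c + (y + - c)) = lift a a' (x + c) + lift a a' (y + - c)"
      using lift_add_indep2 [OF A1(1) A2(1)] off sum A1(2) A2(2) by simp
    then show ?thesis
      using sum A1(2) A2(2) unfolding x'_def y'_def by (simp add: algebra_simps)
  next
    case True
    then have "y' + - c' = - (x' + c')"
      by (simp add: add_eq_0_iff2 algebra_simps)
    then have "rep (x + c) (x' + c')" "rep (y + - c) (- (x' + c'))"
      using lift_rep(1) [OF A1(1)] lift_rep(1) [OF A2(1)] A1(2) A2(2) by simp_all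
    then have "Q (x + y) = {0}"
      using Q_add_null_if_opposite [OF _ _ _ indep2_add_self [OF xc]] Qxy sum by metis
    then show ?thesis
      using lift_null(2) True unfolding x'_def y'_def by simp
  qed
qed

lemma lift_add:
  assumes "off_base a' x" "off_base a' y" "off_base a' (x + y)"
  shows "lift a a' (x + y) = lift a a' x + lift a a' y"
proof (cases "Q x = {0}")
  case True
  then show ?thesis
    using lift_add_null [OF True assms(2)] lift_null(2) [OF True] by (simp add: add.commute)
next
  case Qx: False
  show ?thesis
  proof (cases "Q y = {0}")
    case True
    then show ?thesis
      using lift_add_null [OF True assms(1)] lift_null(2) [OF True] by simp
  next
    case False
    have "lift a a' x \<noteq> 0" "lift a a' y \<noteq> 0"
      using lift_nonzero assms(1,2) Qx False by blast+
    then show ?thesis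
      using lift_add_indep2 [OF assms] lift_add_collinear [OF assms(1,2)] not_indep2_imp_line
      by blast
  qed
qed

end


context point_map
begin

lemma point_map_base_intro: "rep a a' \<Longrightarrow> a' \<noteq> 0 \<Longrightarrow> point_map_base scale Q a a'"
  by (intro point_map_base.intro point_map_base_axioms.intro) unfold_locales

lemma lift_change_base_indep3:
  assumes "rep a a'" "a' \<noteq> 0" "off_base a' b" "off_base a' z" "off_base (lift a a' b) z"
    and "indep3 a' (lift a a' b) (lift a a' z)"
  shows "lift b (lift a a' b) z = lift a a' z"
proof -
  interpret A: point_map_base scale Q a a'
    using assms(1,2) by (rule point_map_base_intro)
  define b' z' where "b' = lift a a' b" and "z' = lift a a' z"
  have rb: "rep b b'" and rab: "rep (a + b) (a' + b')"
    using A.lift_rep [OF assms(3)] unfolding b'_def by auto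
  have rz: "rep z z'"
    using A.lift_rep(1) [OF assms(4)] unfolding z'_def .
  have ramz: "rep (a + - z) (a' + - z')"
    using A.lift_rep(2) [OF A.lift_minus(1) [OF assms(4)]] A.lift_minus(2) [OF assms(4)]
    unfolding z'_def by simp
  have i3: "indep3 a' b' z'"
    using assms(6) unfolding b'_def z'_def .
  then have "b' \<noteq> 0"
    using indep3_imp_indep2 indep2_nonzero by blast
  then interpret B: point_map_base scale Q b b'
    using rb by (intro point_map_base_intro)
  have "indep3 (a' + b') (- (a' + - z')) b'"
    by (rule indep3_transform [OF i3, where fa = "\<lambda>a b c. a - b" and fb = "\<lambda>a b c. a + c"
          and fc = "\<lambda>a b c. b"]) (simp_all add: scale_left_distrib scale_left_diff_distrib algebra_simps)
  then have "rep (b + z) (b' + z')"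
    by (rule rep_sum_two_ways [OF _ _ rab rep_neg [OF ramz] rb rz, rotated -1])
      (simp_all add: algebra_simps)
  then show ?thesis
    using B.lift_eqI [OF _ rz] assms(5) unfolding b'_def z'_def by simp
qed

lemma lift_change_base_coplanar:
  assumes "rep a a'" "a' \<noteq> 0" "off_base a' b" "lift a a' b \<noteq> 0"
    and "off_base a' x" "off_base (lift a a' b) x"
    and "Q x \<noteq> {0}" "lift a a' x \<in> plane a' (lift a a' b)"
  shows "lift b (lift a a' b) x = lift a a' x"
proof -
  interpret A: point_map_base scale Q a a'
    using assms(1,2) by (rule point_map_base_intro)
  define b' x' where "b' = lift a a' b" and "x' = lift a a' x"
  have ab: "indep2 a' b'"
    using A.off_base_indep2 [OF assms(3,4)] unfolding b'_def .
  interpret B: point_map_base scale Q b b'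
    using A.lift_rep(1) [OF assms(3)] assms(4) unfolding b'_def by (intro point_map_base_intro)
  have change: "lift b b' z = lift a a' z"
    if "off_base a' z" "off_base b' z" "indep3 a' b' (lift a a' z)" for z
    using lift_change_base_indep3 [OF assms(1-3)] that unfolding b'_def by blast
  have xpl: "x' \<in> plane a' b'"
    using assms(8) unfolding x'_def b'_def .
  obtain c where off_c: "off_base a' c" and c: "lift a a' c \<notin> plane a' b'"
    using A.exists_lift_off_plane [of a' b'] by auto
  define c' where "c' = lift a a' c"
  have cn: "c' \<notin> plane a' b'" "x' + c' \<notin> plane a' b'"
    using c xpl plane_add_cancel_left unfolding c'_def by blast+
  then have i3c: "indep3 a' b' c'" and i3xc: "indep3 a' b' (x' + c')"
    using ab indep3_iff by blast+
  have "indep2 a' x'"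
    using A.lift_nonzero [OF assms(5,7)] unfolding x'_def by blast
  then have "indep3 a' x' c'"
    using indep3_extend [OF _ _ xpl cn(1)] by simp
  then have A1: "off_base a' (x + c)" "lift a a' (x + c) = x' + c'"
    using A.lift_add_indep3 [OF assms(5) off_c] unfolding x'_def c'_def by auto
  have "indep2 b' (x' + c')" "indep2 b' c'"
    using i3xc i3c indep3_imp_indep2 by blast+
  then have off_xc: "off_base b' (x + c)" and off_c': "off_base b' c"
    using B.off_base_iff A.lift_rep(1) [OF A1(1)] A.lift_rep(1) [OF off_c] A1(2)
    unfolding c'_def by auto
  have "lift b b' (x + c) = x' + c'" "lift b b' c = c'"
    using change [OF A1(1) off_xc] change [OF off_c off_c'] i3xc i3c A1(2)
    unfolding c'_def by simp_all
  moreover have "off_base b' (- c)" "lift b b' (- c) = - lift b b' c"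
    using B.lift_minus [OF off_c'] by auto
  moreover have "off_base b' (x + c + - c)"
    using assms(6) unfolding b'_def by simp
  ultimately have "lift b b' (x + c + - c) = x' + c' + - c'"
    using B.lift_add [OF off_xc] by metis
  then show ?thesis
    unfolding b'_def x'_def by simp
qed

lemma lift_change_base:
  assumes "rep a a'" "a' \<noteq> 0" "off_base a' b" "lift a a' b \<noteq> 0"
    and "off_base a' x" "off_base (lift a a' b) x"
  shows "lift b (lift a a' b) x = lift a a' x"
proof -
  interpret A: point_map_base scale Q a a'
    using assms(1,2) by (rule point_map_base_intro)
  interpret B: point_map_base scale Q b "lift a a' b"
    using A.lift_rep(1) [OF assms(3)] assms(4) by (intro point_map_base_intro)
  consider "Q x = {0}" | "indep3 a' (lift a a' b) (lift a a' x)"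
    | "Q x \<noteq> {0}" "lift a a' x \<in> plane a' (lift a a' b)"
    using A.off_base_indep2 [OF assms(3,4)] not_indep3_imp_plane by blast
  then show ?thesis
  proof cases
    case 1
    then show ?thesis
      using A.lift_null(2) B.lift_null(2) by simp
  next
    case 2
    then show ?thesis
      using lift_change_base_indep3 assms by blast
  next
    case 3
    then show ?thesis
      using lift_change_base_coplanar assms by blast
  qed
qed

lemma exists_common_off_base:
  assumes "indep3 u v w"
  shows "\<exists>e \<in> {u, v, w}. off_base e x \<and> off_base e y \<and> off_base e (x + y)"
proof (rule ccontr)
  assume "\<not> ?thesis"
  then have "u \<in> Q x \<union> Q y \<union> Q (x + y)" "v \<in> Q x \<union> Q y \<union> Q (x + y)"
    "w \<in> Q x \<union> Q y \<union> Q (x + y)"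
    unfolding off_base_def by auto
  moreover obtain x' y' where "rep x x'" "rep y y'"
    using rep_exists by blast
  then have "Q x \<union> Q y \<union> Q (x + y) \<subseteq> plane x' y'"
    by (rule Q_sum_subset_plane)
  ultimately have "u \<in> plane x' y'" "v \<in> plane x' y'" "w \<in> plane x' y'"
    by blast+
  then show False
    using not_indep3_in_plane assms by blast
qed

text \<open>Lifts relative to the three members of an independent triple agree wherever they
  are defined and cover every argument, so together they define one additive lift.\<close>

theorem additive_lift: "\<exists>f. (\<forall>x y. f (x + y) = f x + f y) \<and> (\<forall>x. rep x (f x))"
proof -
  obtain p q r u v w where R: "rep p u" "rep q v" "rep r w" "indep3 u v w"
    using Q_rank unfolding rep_def by blast
  have u0: "u \<noteq> 0" and uv: "indep2 u v" and uw: "indep2 u w"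
    using R(4) indep3_imp_indep2 indep2_nonzero by blast+
  interpret A: point_map_base scale Q p u
    using R(1) u0 by (rule point_map_base_intro)
  have off_q: "off_base u q" and off_r: "off_base u r"
    using A.off_base_iff R(2,3) uv uw by blast+
  define v' w' where "v' = lift p u q" and "w' = lift p u r"
  have rv: "rep q v'" and rw: "rep r w'"
    using A.lift_rep(1) off_q off_r unfolding v'_def w'_def by blast+
  have i3: "indep3 u v' w'"
    using indep3_line_cong [OF R(4)] rep_line_eq rv rw R(2,3) by blast
  then have v0: "v' \<noteq> 0" and w0: "w' \<noteq> 0" and uv': "indep2 u v'" and vw: "indep2 v' w'"
    using indep3_imp_indep2 indep2_nonzero by blast+
  interpret B: point_map_base scale Q q v'
    using rv v0 by (rule point_map_base_intro)
  interpret C: point_map_base scale Q r w'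
    using rw w0 by (rule point_map_base_intro)
  have AB: "lift q v' x = lift p u x" if "off_base u x" "off_base v' x" for x
    using lift_change_base [OF R(1) u0 off_q] v0 that unfolding v'_def by simp
  have AC: "lift r w' x = lift p u x" if "off_base u x" "off_base w' x" for x
    using lift_change_base [OF R(1) u0 off_r] w0 that unfolding w'_def by simp
  have off_r': "off_base v' r"
    using B.off_base_iff [OF rw] vw by blast
  have "lift q v' r = w'"
    using AB [OF off_r off_r'] unfolding w'_def .
  then have BC: "lift r w' x = lift q v' x" if "off_base v' x" "off_base w' x" for x
    using lift_change_base [OF rv v0 off_r'] w0 that by simp
  define f where "f x = (if off_base u x then lift p u x else if off_base v' x then lift q v' x
    else lift r w' x)" for x
  have cover: "off_base u x \<or> off_base v' x" for x
    using indep2_not_in_line [OF uv'] rep_exists [of x] unfolding off_base_def rep_def by blast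
  have fA: "f x = lift p u x" if "off_base u x" for x
    using that unfolding f_def by simp
  have fB: "f x = lift q v' x" if "off_base v' x" for x
    using that AB unfolding f_def by simp
  have fC: "f x = lift r w' x" if "off_base w' x" for x
    using that AC BC cover unfolding f_def by auto
  have "rep x (f x)" for x
    using cover [of x] fA fB A.lift_rep(1) B.lift_rep(1) by metis
  moreover have "f (x + y) = f x + f y" for x y
    using exists_common_off_base [OF i3, of x y] fA fB fC A.lift_add B.lift_add C.lift_add
    by auto
  ultimately show ?thesis
    by blast
qed

theorem semilinear_lift:
  fixes scale1 :: "'k1::division_ring \<Rightarrow> 'x \<Rightarrow> 'x"
  assumes "left_vs scale1" and Q_scale: "\<And>l x. Q (scale1 l x) \<subseteq> Q x"
  shows "\<exists>f. semilinear scale1 scale f \<and> (\<forall>x. Q x = line (f x))"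
proof -
  obtain f where add: "\<And>x y. f (x + y) = f x + f y" and f: "\<And>x. rep x (f x)"
    using additive_lift by blast
  have "f (scale1 l x) \<in> line (f x)" for l x
    using rep_in [OF f] Q_scale f unfolding rep_def by blast
  moreover obtain p t u v where "rep p u" "rep t v" "indep2 u v"
    using Q_rank indep3_imp_indep2 unfolding rep_def by blast
  then have "indep2 (f p) (f t)"
    using indep2_line_cong rep_line_eq f by metis
  ultimately have "\<exists>\<sigma>. divring_hom \<sigma> \<and> (\<forall>l x. f (scale1 l x) = \<sigma> l \<cdot> f x)"
    using semilinear_if_preserves_lines [OF assms(1) add] by blast
  then show ?thesis
    using add f unfolding semilinear_def rep_def by blast
qed

end

section \<open>Closed subspaces of a dual pair\<close>

locale dual_pairing =
  fixes scaleE :: "'k::division_ring \<Rightarrow> 'e::ab_group_add \<Rightarrow> 'e"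
    and scaleF :: "'f::ab_group_add \<Rightarrow> 'k \<Rightarrow> 'f"
    and beta :: "'e \<Rightarrow> 'f \<Rightarrow> 'k"
  assumes dual_pair: "dual_pair scaleE scaleF beta"
begin

sublocale E: left_vector_space scaleE
  by (rule left_vector_space.intro) (use dual_pair in \<open>simp add: dual_pair_def\<close>)

lemma beta_add_left: "beta (x + x') y = beta x y + beta x' y"
  and beta_scale_left: "beta (scaleE a x) y = a * beta x y"
  and beta_add_right: "beta x (y + y') = beta x y + beta x y'"
  and beta_scale_right: "beta x (scaleF y a) = beta x y * a"
  and nondegenerate_left: "(\<forall>y. beta x y = 0) \<Longrightarrow> x = 0"
  using dual_pair unfolding dual_pair_def by blast+

lemma beta_zero_left [simp]: "beta 0 y = 0"
  using beta_add_left [of 0 0 y] by simp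

lemma beta_diff_left: "beta (x - x') y = beta x y - beta x' y"
  using beta_add_left [of "x - x'" x' y] by (simp add: eq_diff_eq)

lemma beta_diff_right: "beta x (y - y') = beta x y - beta x y'"
  using beta_add_right [of x "y - y'" y'] by (simp add: eq_diff_eq)

definition biperp :: "'e set \<Rightarrow> 'e set"
  where "biperp A = perpF beta (perpE beta A)"

lemma biperp_extensive: "A \<subseteq> biperp A"
  unfolding biperp_def perpE_def perpF_def by auto

lemma biperp_mono: "A \<subseteq> B \<Longrightarrow> biperp A \<subseteq> biperp B"
  unfolding biperp_def perpE_def perpF_def by auto

lemma biperp_idem: "biperp (biperp A) = biperp A"
proof -
  have "perpE beta (biperp A) = perpE beta A"
    unfolding biperp_def perpE_def perpF_def by auto
  then show ?thesis
    unfolding biperp_def by simp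
qed

lemma closedL_iff: "A \<in> closedL beta \<longleftrightarrow> biperp A = A"
  unfolding closedL_def biperp_def by simp

lemma Ljoin_eq: "Ljoin beta S = biperp (\<Union>S)"
  unfolding Ljoin_def biperp_def by simp

lemma biperp_empty: "biperp {} = {0}"
proof -
  have "perpE beta {} = UNIV"
    unfolding perpE_def by auto
  then show ?thesis
    using nondegenerate_left unfolding biperp_def perpF_def by auto
qed

lemma Lbot_eq: "Lbot beta = {0}"
  unfolding Lbot_def Ljoin_eq by (simp add: biperp_empty)

lemma zero_in_biperp: "0 \<in> biperp A"
  unfolding biperp_def perpF_def by simp

lemma biperp_add: "x \<in> biperp A \<Longrightarrow> y \<in> biperp A \<Longrightarrow> x + y \<in> biperp A"
  unfolding biperp_def perpF_def by (simp add: beta_add_left)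

lemma biperp_scale: "x \<in> biperp A \<Longrightarrow> scaleE a x \<in> biperp A"
  unfolding biperp_def perpF_def by (simp add: beta_scale_left)

lemma biperp_zero: "biperp {0} = {0}"
proof -
  have "perpE beta {0} = perpE beta {}"
    unfolding perpE_def by auto
  then show ?thesis
    using biperp_empty unfolding biperp_def by simp
qed

lemma span1_subset_closed:
  assumes "biperp A = A" "v \<in> A"
  shows "span1 scaleE v \<subseteq> A"
  using biperp_scale [of v A] assms unfolding span1_def by auto

lemma plane_subset_closed:
  assumes "biperp A = A" "u \<in> A" "v \<in> A"
  shows "E.plane u v \<subseteq> A"
proof
  fix z
  assume "z \<in> E.plane u v"
  then obtain a b where "z = scaleE a u + scaleE b v"
    unfolding E.plane_iff by blast
  then show "z \<in> A"
    using biperp_add [of "scaleE a u" A "scaleE b v"] biperp_scale [of u A a]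
      biperp_scale [of v A b] assms by simp
qed

definition add_line :: "'e set \<Rightarrow> 'e \<Rightarrow> 'e set"
  where "add_line A x = {a + scaleE l x | a l. a \<in> A}"

lemma add_line_absorb:
  assumes "biperp A = A" "x \<in> A"
  shows "add_line A x = A"
proof
  show "add_line A x \<subseteq> A"
  proof
    fix e
    assume "e \<in> add_line A x"
    then obtain a l where "e = a + scaleE l x" "a \<in> A"
      unfolding add_line_def by blast
    then show "e \<in> A"
      using biperp_add [of a A "scaleE l x"] biperp_scale [of x A l] assms by simp
  qed
  have "a + scaleE 0 x \<in> add_line A x" if "a \<in> A" for a
    using that unfolding add_line_def by blast
  then show "A \<subseteq> add_line A x"
    by auto
qed

text \<open>If \<open>x \<notin> A\<close>, choose \<open>y\<^sub>0 \<in> A\<^sup>\<bottom>\<close> with \<open>\<beta>(x, y\<^sub>0) = 1\<close>; then \<open>z - \<beta>(z, y\<^sub>0) x\<close> lies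
  in \<open>A\<^sup>\<bottom>\<^sup>\<bottom> = A\<close> for every \<open>z\<close> in the closure of \<open>A + \<bbbK>x\<close>.\<close>

lemma biperp_add_line:
  assumes A: "biperp A = A"
  shows "biperp (add_line A x) = add_line A x"
proof (cases "x \<in> A")
  case True
  then show ?thesis
    using A add_line_absorb by simp
next
  case False
  then obtain y where y: "y \<in> perpE beta A" "beta x y \<noteq> 0"
    using A unfolding biperp_def perpF_def by auto
  define y0 where "y0 = scaleF y (inverse (beta x y))"
  have xy0: "beta x y0 = 1"
    using y(2) unfolding y0_def by (simp add: beta_scale_right)
  have y0A: "y0 \<in> perpE beta A"
    using y(1) unfolding y0_def perpE_def by (simp add: beta_scale_right)
  have "z \<in> add_line A x" if z: "z \<in> biperp (add_line A x)" for z
  proof -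
    have "beta z w = beta z y0 * beta x w" if w: "w \<in> perpE beta A" for w
    proof -
      define w' where "w' = w - scaleF y0 (beta x w)"
      have "beta e w' = 0" if "e \<in> add_line A x" for e
      proof -
        obtain a l where e: "e = a + scaleE l x" "a \<in> A"
          using \<open>e \<in> add_line A x\<close> unfolding add_line_def by blast
        have "beta a w = 0" "beta a y0 = 0"
          using w y0A e(2) unfolding perpE_def by auto
        then show ?thesis
          unfolding e(1) w'_def
          by (simp add: beta_add_left beta_scale_left beta_diff_right beta_scale_right xy0)
      qed
      then have "beta z w' = 0"
        using z unfolding biperp_def perpF_def perpE_def by blast
      then show ?thesis
        unfolding w'_def by (simp add: beta_diff_right beta_scale_right)
    qed
    then have "z - scaleE (beta z y0) x \<in> biperp A"
      unfolding biperp_def perpF_def by (simp add: beta_diff_left beta_scale_left)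
    then have "z - scaleE (beta z y0) x \<in> A"
      using A by simp
    moreover have "z = (z - scaleE (beta z y0) x) + scaleE (beta z y0) x"
      by simp
    ultimately show ?thesis
      unfolding add_line_def by blast
  qed
  then show ?thesis
    using biperp_extensive by blast
qed

lemma biperp_span1: "biperp (span1 scaleE v) = span1 scaleE v"
proof -
  have "span1 scaleE v = add_line {0} v"
    unfolding span1_def add_line_def by auto
  then show ?thesis
    using biperp_add_line [OF biperp_zero] by simp
qed

lemma biperp_plane: "biperp (E.plane u v) = E.plane u v"
proof -
  have "E.plane u v = add_line (span1 scaleE u) v"
    unfolding E.plane_def add_line_def span1_def by blast
  then show ?thesis
    using biperp_add_line [OF biperp_span1] by simp
qed

lemma Latom_span1:
  assumes "v \<noteq> 0"
  shows "Latom beta (span1 scaleE v)"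
  unfolding Latom_def
proof (intro conjI ballI impI)
  show "span1 scaleE v \<in> closedL beta"
    using biperp_span1 closedL_iff by blast
  show "span1 scaleE v \<noteq> Lbot beta"
    using assms E.line_eq_0_iff unfolding Lbot_eq by simp
  fix B
  assume B: "B \<in> closedL beta" "B \<subset> span1 scaleE v"
  then have Bc: "biperp B = B"
    using closedL_iff by blast
  have "w = 0" if "w \<in> B" for w
  proof (rule ccontr)
    assume "w \<noteq> 0"
    then have "E.line w = E.line v"
      using that B(2) E.line_eq_if_mem by blast
    then show False
      using span1_subset_closed [OF Bc that] B(2) by simp
  qed
  then show "B = Lbot beta"
    using Bc zero_in_biperp unfolding Lbot_eq by blast
qed

lemma Latom_imp_span1:
  assumes "Latom beta A"
  shows "\<exists>w. A = span1 scaleE w"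
proof -
  have Ac: "biperp A = A"
    using assms closedL_iff unfolding Latom_def by blast
  moreover have "A \<noteq> {0}"
    using assms Lbot_eq unfolding Latom_def by simp
  ultimately obtain w where w: "w \<in> A" "w \<noteq> 0"
    using zero_in_biperp by blast
  then have "span1 scaleE w \<subseteq> A"
    using span1_subset_closed [OF Ac] by blast
  moreover have "\<not> span1 scaleE w \<subset> A"
    using assms Latom_span1 [OF w(2)] unfolding Latom_def by blast
  ultimately show ?thesis
    by blast
qed

lemma length_ge_3_imp_indep3:
  assumes "length_ge P 3" "P \<subseteq> closedL beta"
  shows "\<exists>A\<in>P. \<exists>p q r. p \<in> A \<and> q \<in> A \<and> r \<in> A \<and> E.indep3 p q r"
proof -
  obtain c where c: "\<forall>i\<le>3. c i \<in> P" "\<forall>i<3. c i \<subset> c (Suc i)"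
    using assms(1) unfolding length_ge_def by blast
  have closed: "biperp (c i) = c i" if "i \<le> 3" for i
    using c(1) that assms(2) closedL_iff by blast
  have c01: "c 0 \<subset> c 1" and c12: "c 1 \<subset> c 2" and c23: "c 2 \<subset> c 3"
    using c(2) by (auto simp: numeral_eq_Suc)
  obtain p where p: "p \<in> c 1" "p \<notin> c 0"
    using c01 by blast
  obtain q where q: "q \<in> c 2" "q \<notin> c 1"
    using c12 by blast
  obtain r where r: "r \<in> c 3" "r \<notin> c 2"
    using c23 by blast
  have "p \<noteq> 0"
    using p zero_in_biperp closed [of 0] by auto
  moreover have "q \<notin> E.line p"
    using q span1_subset_closed [OF closed p(1)] by auto
  moreover have "r \<notin> E.plane p q"
    using r plane_subset_closed [OF closed, of 2 p q] p(1) q(1) c12 by auto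
  ultimately have "E.indep3 p q r"
    using E.indep2_iff E.indep3_iff by blast
  moreover have "p \<in> c 3" "q \<in> c 3"
    using p(1) q(1) c12 c23 by auto
  ultimately show ?thesis
    using c(1) r(1) by auto
qed

end

section \<open>Join-preserving maps\<close>

locale join_preserving_map =
  D1: dual_pairing scaleE1 scaleF1 beta1 + D2: dual_pairing scaleE2 scaleF2 beta2
  for scaleE1 :: "'k1::division_ring \<Rightarrow> 'e1::ab_group_add \<Rightarrow> 'e1"
    and scaleF1 :: "'f1::ab_group_add \<Rightarrow> 'k1 \<Rightarrow> 'f1"
    and beta1 :: "'e1 \<Rightarrow> 'f1 \<Rightarrow> 'k1"
    and scaleE2 :: "'k2::division_ring \<Rightarrow> 'e2::ab_group_add \<Rightarrow> 'e2"
    and scaleF2 :: "'f2::ab_group_add \<Rightarrow> 'k2 \<Rightarrow> 'f2"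
    and beta2 :: "'e2 \<Rightarrow> 'f2 \<Rightarrow> 'k2" +
  fixes g :: "'e1 set \<Rightarrow> 'e2 set"
  assumes g_closed: "g ` closedL beta1 \<subseteq> closedL beta2"
    and g_Ljoin: "\<forall>S. S \<subseteq> closedL beta1 \<longrightarrow> g (Ljoin beta1 S) = Ljoin beta2 (g ` S)"
    and g_Latom: "\<forall>A. Latom beta1 A \<longrightarrow> Latom beta2 (g A) \<or> g A = Lbot beta2"
begin

lemma g_biperp_Union:
  assumes "\<And>A. A \<in> S \<Longrightarrow> D1.biperp A = A"
  shows "g (D1.biperp (\<Union>S)) = D2.biperp (\<Union>(g ` S))"
proof -
  have "S \<subseteq> closedL beta1"
    using assms D1.closedL_iff by blast
  then show ?thesis
    using g_Ljoin unfolding D1.Ljoin_eq D2.Ljoin_eq by blast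
qed

lemma g_mono:
  assumes "D1.biperp A = A" "D1.biperp B = B" "A \<subseteq> B"
  shows "g A \<subseteq> g B"
proof -
  have "g B = g (D1.biperp (\<Union>{A, B}))"
    using assms by (simp add: sup.absorb2)
  also have "\<dots> = D2.biperp (\<Union>(g ` {A, B}))"
    using assms by (intro g_biperp_Union) auto
  finally show ?thesis
    using D2.biperp_extensive [of "g A \<union> g B"] by auto
qed

lemma g_span1_line: "\<exists>w. g (span1 scaleE1 x) = span1 scaleE2 w"
proof (cases "x = 0")
  case True
  have "g (span1 scaleE1 x) = g (D1.biperp (\<Union>{}))"
    using True D1.biperp_empty by simp
  also have "\<dots> = span1 scaleE2 0"
    using g_biperp_Union [of "{}"] D2.biperp_empty by simp
  finally show ?thesis
    by blast
next
  case False
  then have "Latom beta2 (g (span1 scaleE1 x)) \<or> g (span1 scaleE1 x) = Lbot beta2"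
    using g_Latom D1.Latom_span1 by blast
  then show ?thesis
    using D2.Latom_imp_span1 D2.Lbot_eq D2.E.line_0 by metis
qed

lemma g_span1_scale: "g (span1 scaleE1 (scaleE1 l x)) \<subseteq> g (span1 scaleE1 x)"
  using D1.E.line_subset_line [OF D1.E.line_scale [OF D1.E.line_self]]
  by (intro g_mono D1.biperp_span1)

lemma g_span1_add:
  assumes "g (span1 scaleE1 x) = span1 scaleE2 u" "g (span1 scaleE1 y) = span1 scaleE2 v"
  shows "g (span1 scaleE1 (x + y)) \<subseteq> D2.E.plane u v"
proof -
  define J where "J = D1.biperp (span1 scaleE1 x \<union> span1 scaleE1 y)"
  have J: "D1.biperp J = J"
    unfolding J_def D1.biperp_idem ..
  have "x \<in> J" "y \<in> J"
    using D1.biperp_extensive [of "span1 scaleE1 x \<union> span1 scaleE1 y"] D1.E.line_self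
    unfolding J_def by blast+
  then have "span1 scaleE1 (x + y) \<subseteq> J"
    using D1.biperp_add J D1.span1_subset_closed [OF J] by metis
  then have "g (span1 scaleE1 (x + y)) \<subseteq> g J"
    using J by (intro g_mono D1.biperp_span1)
  also have "g J = D2.biperp (\<Union>(g ` {span1 scaleE1 x, span1 scaleE1 y}))"
    unfolding J_def by (subst g_biperp_Union [symmetric]) (auto simp: D1.biperp_span1)
  also have "\<dots> = D2.biperp (span1 scaleE2 u \<union> span1 scaleE2 v)"
    using assms by simp
  also have "\<dots> \<subseteq> D2.biperp (D2.E.plane u v)"
    by (intro D2.biperp_mono Un_least D2.E.line_subset_plane_left D2.E.line_subset_plane_right)
  also have "\<dots> = D2.E.plane u v"
    by (rule D2.biperp_plane)
  finally show ?thesis .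
qed

lemma g_subset_plane:
  assumes "\<And>x. g (span1 scaleE1 x) \<subseteq> D2.E.plane u v" "D1.biperp A = A"
  shows "g A \<subseteq> D2.E.plane u v"
proof -
  have "\<Union>((\<lambda>x. span1 scaleE1 x) ` A) = A"
    using D1.span1_subset_closed [OF assms(2)] D1.E.line_self by blast
  then have "g A = g (D1.biperp (\<Union>((\<lambda>x. span1 scaleE1 x) ` A)))"
    using assms(2) by simp
  also have "\<dots> = D2.biperp (\<Union>((\<lambda>x. g (span1 scaleE1 x)) ` A))"
    by (subst g_biperp_Union) (auto simp: D1.biperp_span1 image_image)
  also have "\<dots> \<subseteq> D2.biperp (D2.E.plane u v)"
    using assms(1) by (intro D2.biperp_mono) blast
  finally show ?thesis
    using D2.biperp_plane by simp
qed

lemma g_span1_rank: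
  assumes "length_ge (g ` closedL beta1) 3"
  shows "\<exists>a b c u v w. g (span1 scaleE1 a) = span1 scaleE2 u \<and> g (span1 scaleE1 b) = span1 scaleE2 v
    \<and> g (span1 scaleE1 c) = span1 scaleE2 w \<and> D2.E.indep3 u v w"
proof (rule ccontr)
  assume no_indep3: "\<not> ?thesis"
  have "\<exists>u v. \<forall>x. g (span1 scaleE1 x) \<subseteq> D2.E.plane u v"
  proof (rule D2.E.common_plane_if_not_indep3)
    show "\<exists>w. g (span1 scaleE1 x) = span1 scaleE2 w" for x
      by (rule g_span1_line)
    show "\<not> D2.E.indep3 u v w" if "g (span1 scaleE1 a) = span1 scaleE2 u"
      "g (span1 scaleE1 b) = span1 scaleE2 v" "g (span1 scaleE1 c) = span1 scaleE2 w" for a b c u v w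
      using no_indep3 that by blast
  qed
  then obtain u v where uv: "\<And>x. g (span1 scaleE1 x) \<subseteq> D2.E.plane u v"
    by blast
  obtain B p q r where "B \<in> g ` closedL beta1" "p \<in> B" "q \<in> B" "r \<in> B" "D2.E.indep3 p q r"
    using D2.length_ge_3_imp_indep3 [OF assms g_closed] by blast
  moreover from this obtain A where "B = g A" "D1.biperp A = A"
    using D1.closedL_iff by blast
  ultimately have "p \<in> D2.E.plane u v" "q \<in> D2.E.plane u v" "r \<in> D2.E.plane u v"
    "D2.E.indep3 p q r"
    using g_subset_plane [OF uv] by blast+
  then show False
    using D2.E.not_indep3_in_plane by blast
qed

lemma g_span1_point_map:
  assumes "length_ge (g ` closedL beta1) 3"
  shows "point_map scaleE2 (\<lambda>x. g (span1 scaleE1 x))"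
  using D2.E.scale_laws g_span1_line D1.E.line_minus g_span1_add g_span1_rank [OF assms]
  by unfold_locales auto

end

theorem corollary8p4:
  fixes scE1 :: "'k1::division_ring \<Rightarrow> 'e1::ab_group_add \<Rightarrow> 'e1"
    and scF1 :: "'f1::ab_group_add \<Rightarrow> 'k1 \<Rightarrow> 'f1"
    and beta1 :: "'e1 \<Rightarrow> 'f1 \<Rightarrow> 'k1"
    and scE2 :: "'k2::division_ring \<Rightarrow> 'e2::ab_group_add \<Rightarrow> 'e2"
    and scF2 :: "'f2::ab_group_add \<Rightarrow> 'k2 \<Rightarrow> 'f2"
    and beta2 :: "'e2 \<Rightarrow> 'f2 \<Rightarrow> 'k2"
    and g :: "'e1 set \<Rightarrow> 'e2 set"
  assumes "dual_pair scE1 scF1 beta1"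
    and "dual_pair scE2 scF2 beta2"
    and "g ` closedL beta1 \<subseteq> closedL beta2"
    and "\<forall>S. S \<subseteq> closedL beta1 \<longrightarrow> g (Ljoin beta1 S) = Ljoin beta2 (g ` S)"
    and "\<forall>A. Latom beta1 A \<longrightarrow> Latom beta2 (g A) \<or> g A = Lbot beta2"
    and "length_ge (g ` closedL beta1) 3"
  shows "\<exists>f. semilinear scE1 scE2 f \<and> (\<forall>v. g (span1 scE1 v) = span1 scE2 (f v))"
proof -
  interpret join_preserving_map scE1 scF1 beta1 scE2 scF2 beta2 g
    using assms(1-5) by (intro join_preserving_map.intro join_preserving_map_axioms.intro
        dual_pairing.intro)
  interpret point_map scE2 "\<lambda>x. g (span1 scE1 x)"
    using g_span1_point_map [OF assms(6)] .
  show ?thesis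
    using semilinear_lift [OF D1.E.scale_laws g_span1_scale] by simp
qed

end
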